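(* For each $\beta>0$ there exists a radial weight $\nu\in\widehat{\mathcal{D}}$ such that $\nu_{[\beta]}\notin\widehat{\mathcal{D}}$, where $\nu_{[\beta]}(z)=\nu(z)(1-|z|)^\beta$.
   Context: A radial weight is a non-negative $\omega\in L^1([0,1))$, extended to the unit disc by $\omega(z)=\omega(|z|)$, with $\widehat{\omega}(r)=\int_r^1\omega(s)\,ds>0$ for all $0\le r<1$. A radial weight $\nu$ belongs to $\widehat{\mathcal{D}}$ if there is $C\ge1$ with $\widehat{\nu}(r)\le C\,\widehat{\nu}\big(\frac{1+r}{2}\big)$ for all $0\le r<1$. *)

theory Defs
  imports "HOL-Analysis.Analysis"
begin

text \<open>A radial weight is represented by its profile on [0,1); values outside [0,1)
are irrelevant. omega_hat r = integral of omega over [r,1).\<close>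

definition omega_hat :: "(real \<Rightarrow> real) \<Rightarrow> real \<Rightarrow> real" where
  "omega_hat \<omega> r = (LINT s:{r..<1}|lborel. \<omega> s)"

definition radial_weight :: "(real \<Rightarrow> real) \<Rightarrow> bool" where
  "radial_weight \<omega> \<longleftrightarrow>
     (\<forall>r\<in>{0..<1}. 0 \<le> \<omega> r) \<and>
     set_integrable lborel {0..<1} \<omega> \<and>
     (\<forall>r\<in>{0..<1}. omega_hat \<omega> r > 0)"

definition D_hat :: "(real \<Rightarrow> real) set" where
  "D_hat = {\<nu>. radial_weight \<nu> \<and>
     (\<exists>C\<ge>1. \<forall>r\<in>{0..<1}. omega_hat \<nu> r \<le> C * omega_hat \<nu> ((1 + r) / 2))}"

definition weight_power :: "(real \<Rightarrow> real) \<Rightarrow> real \<Rightarrow> real \<Rightarrow> real" where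
  "weight_power \<nu> \<beta> r = \<nu> r * (1 - r) powr \<beta>"

end

theory Submission
  imports Defs "HOL-Real_Asymp.Real_Asymp"
begin

text \<open>
  In the variable \<open>t = -ln (1 - s)\<close> the density \<open>\<psi>(s) = 1 / ((1 - s) ln\<^sup>2 (1 - s))\<close>
  becomes \<open>dt / t\<^sup>2\<close> and the weight \<open>(1 - s)\<^sup>\<beta>\<close> becomes \<open>e\<^sup>-\<^sup>\<beta>\<^sup>t\<close>.
  Let \<open>\<nu>\<close> be \<open>\<psi>\<close> restricted to the blocks \<open>t \<in> [4\<^sup>j, 2 \<cdot> 4\<^sup>j)\<close>.
  Every \<open>\<nu>\<close>-tail \<open>t \<ge> T\<close> is comparable to \<open>1/T\<close>, because a whole block lies within a
  bounded factor of \<open>T\<close>; hence \<open>\<nu> \<in> D_hat\<close>.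
  For \<open>\<nu>(1 - s)\<^sup>\<beta>\<close>, take \<open>r\<close> with \<open>(1 + r)/2\<close> at the end \<open>t = 2a\<close> of a block, \<open>a = 4\<^sup>j\<close>:
  the tail from \<open>r\<close> still contains a piece of that block of mass about \<open>e\<^sup>-\<^sup>2\<^sup>a\<^sup>\<beta>/a\<^sup>2\<close>,
  while the tail from \<open>(1 + r)/2\<close> only starts at \<open>t = 4a\<close> and has mass at most
  \<open>e\<^sup>-\<^sup>4\<^sup>a\<^sup>\<beta>/a\<close>. The ratio \<open>e\<^sup>2\<^sup>a\<^sup>\<beta>/a\<close> is unbounded.
\<close>

lemma le_one_minus_exp_iff:
  fixes r y :: real
  assumes "r < 1"
  shows "r \<le> 1 - exp (- y) \<longleftrightarrow> - ln (1 - r) \<le> y"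
proof -
  have "r \<le> 1 - exp (- y) \<longleftrightarrow> exp (- y) \<le> exp (ln (1 - r))"
    using assms by simp linarith
  also have "\<dots> \<longleftrightarrow> - ln (1 - r) \<le> y" by (subst exp_le_cancel_iff) linarith
  finally show ?thesis .
qed

lemma two_exp_neg_double_le:
  fixes a :: real
  assumes "1 \<le> a"
  shows "2 * exp (- (2 * a)) \<le> exp (- a)"
proof -
  have "2 \<le> exp a" using exp_ge_add_one_self[of a] assms by linarith
  then have "2 * exp (- a) \<le> 1" by (simp add: exp_minus field_simps)
  have "2 * exp (- (2 * a)) = 2 * exp (- a) * exp (- a)" by (simp flip: exp_add)
  also have "\<dots> \<le> 1 * exp (- a)" using \<open>2 * exp (- a) \<le> 1\<close> by (intro mult_right_mono) simp_all
  finally show ?thesis by simp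
qed

lemma square_half_less_exp:
  fixes x :: real
  assumes "0 < x"
  shows "x\<^sup>2 / 2 < exp x"
  using exp_lower_Taylor_quadratic[of x] assms by simp

lemma exists_pow4_between:
  fixes X :: real
  assumes "1 \<le> X"
  obtains j where "X + 1 \<le> 4 ^ j" "4 ^ j \<le> 8 * X"
proof -
  have ex: "\<exists>n. X + 1 \<le> (4::real) ^ n"
    using real_arch_pow[of 4 "X + 1"] by (auto intro: less_imp_le)
  define j where "j = (LEAST n. X + 1 \<le> (4::real) ^ n)"
  have j: "X + 1 \<le> 4 ^ j" "\<And>m. m < j \<Longrightarrow> 4 ^ m < X + 1"
    using LeastI_ex[OF ex] not_less_Least[of _ "\<lambda>n. X + 1 \<le> (4::real) ^ n"]
    unfolding j_def by (auto simp: not_le)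
  have "(4::real) ^ j \<le> 8 * X"
  proof (cases j)
    case (Suc i)
    then show ?thesis using j(2)[of i] assms by simp
  qed (use assms in simp)
  with j(1) show ?thesis by (rule that)
qed

definition psi :: "real \<Rightarrow> real" where
  "psi s = 1 / ((1 - s) * ln (1 - s) ^ 2)"

definition Psi :: "real \<Rightarrow> real" where
  "Psi s = 1 / ln (1 - s)"

lemma Psi_has_real_derivative:
  assumes "0 < s" "s < 1"
  shows "(Psi has_real_derivative psi s) (at s)"
proof -
  have "ln (1 - s) \<noteq> 0" using assms by simp
  then show ?thesis
    using assms unfolding Psi_def psi_def
    by (auto intro!: derivative_eq_intros simp: field_split_simps power2_eq_square)
qed

lemma psi_nonneg: "s < 1 \<Longrightarrow> 0 \<le> psi s"
  unfolding psi_def by simp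

lemma isCont_psi: "0 < s \<Longrightarrow> s < 1 \<Longrightarrow> isCont psi s"
  unfolding psi_def by (auto intro!: continuous_intros)

lemma psi_measurable [measurable]: "psi \<in> borel_measurable lborel"
  unfolding psi_def by measurable

lemma isCont_Psi: "0 < s \<Longrightarrow> s < 1 \<Longrightarrow> isCont Psi s"
  using Psi_has_real_derivative DERIV_isCont by blast

lemma Psi_one_minus_exp: "0 < y \<Longrightarrow> Psi (1 - exp (- y)) = - 1 / y"
  unfolding Psi_def by simp

text \<open>Since \<open>ln 0 = 0\<close> in Isabelle, \<open>Psi 1 = 0\<close>, which is exactly the limit of \<open>Psi\<close> at \<open>1\<close>.\<close>

lemma Psi_tendsto_at_left:
  assumes "0 < b" "b \<le> 1"
  shows "(Psi \<longlongrightarrow> Psi b) (at_left b)"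
proof (cases "b = 1")
  case True
  have "(Psi \<longlongrightarrow> 0) (at_left (1::real))" unfolding Psi_def[abs_def] by real_asymp
  then show ?thesis using True by (simp add: Psi_def)
next
  case False
  then have "isCont Psi b" using assms by (intro isCont_Psi) auto
  then show ?thesis by (simp add: isCont_def filterlim_at_split)
qed

lemma psi_set_integral:
  assumes "0 < a" "a < b" "b \<le> 1"
  shows "set_integrable lborel {a<..<b} psi"
    and "(LINT s:{a<..<b}|lborel. psi s) = Psi b - Psi a"
proof -
  have "isCont Psi a" using assms by (intro isCont_Psi) auto
  then have "((Psi \<circ> real_of_ereal) \<longlongrightarrow> Psi a) (at_right (ereal a))"
    by (simp add: isCont_def filterlim_at_split at_right_ereal filterlim_filtermap o_def)
  moreover have "((Psi \<circ> real_of_ereal) \<longlongrightarrow> Psi b) (at_left (ereal b))"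
    using Psi_tendsto_at_left[of b] assms
    by (simp add: at_left_ereal filterlim_filtermap o_def)
  ultimately have "set_integrable lborel (einterval a b) psi
      \<and> (LBINT s=ereal a..ereal b. psi s) = Psi b - Psi a"
    using assms
    by (intro conjI interval_integral_FTC_nonneg)
       (auto intro!: Psi_has_real_derivative isCont_psi psi_nonneg)
  then show "set_integrable lborel {a<..<b} psi"
    and "(LINT s:{a<..<b}|lborel. psi s) = Psi b - Psi a"
    using assms by (simp_all add: interval_lebesgue_integral_def)
qed

lemma set_integral_ge_Psi_diff:
  fixes f :: "real \<Rightarrow> real"
  assumes f: "integrable lborel f" "\<And>s. 0 \<le> f s"
    and pq: "0 < p" "p < q" "q < 1" "r \<le> p"
    and le: "\<And>s. s \<in> {p<..<q} \<Longrightarrow> c * psi s \<le> f s"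
  shows "c * (Psi q - Psi p) \<le> (LINT s:{r..<1}|lborel. f s)"
proof -
  have psi_int: "integrable lborel (\<lambda>s. indicator {p<..<q} s *\<^sub>R psi s)"
    using psi_set_integral(1)[of p q] pq unfolding set_integrable_def by simp
  have "c * (Psi q - Psi p) = (LINT s|lborel. c * (indicator {p<..<q} s *\<^sub>R psi s))"
    using psi_set_integral(2)[of p q] pq unfolding set_lebesgue_integral_def by simp
  also have "\<dots> \<le> (LINT s|lborel. indicator {r..<1} s *\<^sub>R f s)"
  proof (rule integral_mono)
    show "integrable lborel (\<lambda>s. c * (indicator {p<..<q} s *\<^sub>R psi s))"
      using psi_int by simp
    show "integrable lborel (\<lambda>s. indicator {r..<1} s *\<^sub>R f s)"
      using f(1) by (rule integrable_mult_indicator[rotated]) simp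
    show "c * (indicator {p<..<q} s *\<^sub>R psi s) \<le> indicator {r..<1} s *\<^sub>R f s" for s
      using le[of s] f(2)[of s] pq by (auto simp: indicator_def)
  qed
  finally show ?thesis unfolding set_lebesgue_integral_def .
qed

lemma set_integral_le_Psi:
  fixes f :: "real \<Rightarrow> real"
  assumes f: "integrable lborel f"
    and a: "0 < a" "a < 1" and "0 \<le> c"
    and le: "\<And>s. r \<le> s \<Longrightarrow> s < 1 \<Longrightarrow> f s \<le> (if a \<le> s then c * psi s else 0)"
  shows "(LINT s:{r..<1}|lborel. f s) \<le> c * - Psi a"
proof -
  have psi_int: "integrable lborel (\<lambda>s. indicator {a<..<1} s *\<^sub>R psi s)"
    using psi_set_integral(1)[of a 1] a unfolding set_integrable_def by simp
  have "(LINT s|lborel. indicator {r..<1} s *\<^sub>R f s)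
      \<le> (LINT s|lborel. c * (indicator {a<..<1} s *\<^sub>R psi s))"
  proof (rule integral_mono_AE)
    show "integrable lborel (\<lambda>s. indicator {r..<1} s *\<^sub>R f s)"
      using f by (rule integrable_mult_indicator[rotated]) simp
    show "integrable lborel (\<lambda>s. c * (indicator {a<..<1} s *\<^sub>R psi s))"
      using psi_int by simp
    show "AE s in lborel. indicator {r..<1} s *\<^sub>R f s \<le> c * (indicator {a<..<1} s *\<^sub>R psi s)"
      using AE_lborel_singleton[of a]
    proof eventually_elim
      case (elim s)
      show ?case
        using le[of s] psi_nonneg[of s] \<open>0 \<le> c\<close> elim
        by (cases "r \<le> s \<and> s < 1") (auto simp: indicator_def)
    qed
  qed
  also have "\<dots> = c * - Psi a"
    using psi_set_integral(2)[of a 1] a by (simp add: set_lebesgue_integral_def Psi_def)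
  finally show ?thesis unfolding set_lebesgue_integral_def .
qed

definition block :: "nat \<Rightarrow> real set" where
  "block j = {1 - exp (- (4 ^ j)) ..< 1 - exp (- (2 * 4 ^ j))}"

definition blocks :: "real set" where
  "blocks = (\<Union>j. block j)"

definition nu :: "real \<Rightarrow> real" where
  "nu s = (if s \<in> blocks then psi s else 0)"

lemma blocks_subset: "blocks \<subseteq> {1 - exp (- 1) ..< 1}"
proof
  fix s assume "s \<in> blocks"
  then obtain j where "1 - exp (- (4 ^ j)) \<le> s" "s < 1 - exp (- (2 * 4 ^ j))"
    unfolding blocks_def block_def by auto
  moreover have "exp (- ((4::real) ^ j)) \<le> exp (- 1)" by simp
  moreover have "0 < exp (- (2 * (4::real) ^ j))" by simp
  ultimately show "s \<in> {1 - exp (- 1) ..< 1}"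
    unfolding atLeastLessThan_iff by (intro conjI) linarith+
qed

lemma block_interior_subset_blocks:
  "{1 - exp (- (4 ^ j)) <..< 1 - exp (- (2 * 4 ^ j))} \<subseteq> blocks"
  unfolding blocks_def block_def by (intro subsetI UN_I[of j]) auto

lemma blocks_gap:
  assumes "s \<in> blocks" "1 - exp (- (2 * 4 ^ j)) \<le> s"
  shows "1 - exp (- (4 ^ Suc j)) \<le> s"
proof -
  obtain i where i: "s \<in> block i" using assms(1) unfolding blocks_def by blast
  have "j < i"
  proof (rule ccontr)
    assume "\<not> j < i"
    then have "(4::real) ^ i \<le> 4 ^ j" by (intro power_increasing) auto
    then have "exp (- (2 * 4 ^ j)) \<le> exp (- (2 * (4::real) ^ i))" by simp
    moreover have "s < 1 - exp (- (2 * 4 ^ i))" using i unfolding block_def by simp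
    ultimately show False using assms(2) by linarith
  qed
  then have "(4::real) ^ Suc j \<le> 4 ^ i" by (intro power_increasing) auto
  then have "exp (- (4 ^ i)) \<le> exp (- ((4::real) ^ Suc j))" by simp
  moreover have "1 - exp (- (4 ^ i)) \<le> s" using i unfolding block_def by simp
  ultimately show ?thesis by linarith
qed

lemma nu_nonneg: "0 \<le> nu s"
  using blocks_subset psi_nonneg unfolding nu_def by auto

lemma nu_measurable [measurable]: "nu \<in> borel_measurable lborel"
proof -
  have "blocks \<in> sets lborel" unfolding blocks_def block_def by measurable
  then show ?thesis unfolding nu_def by (intro measurable_If_set) auto
qed

lemma integrable_nu: "integrable lborel nu"
proof (rule Bochner_Integration.integrable_bound)
  show "integrable lborel (\<lambda>s. indicator {1 - exp (- 1)<..<1} s *\<^sub>R psi s)"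
    using psi_set_integral(1)[of "1 - exp (- 1)" 1] unfolding set_integrable_def by simp
  show "AE s in lborel. norm (nu s) \<le> norm (indicator {1 - exp (- 1)<..<1} s *\<^sub>R psi s)"
    using AE_lborel_singleton[of "1 - exp (- 1)"]
    by eventually_elim (use blocks_subset in \<open>auto simp: nu_def\<close>)
qed simp

lemma nu_hat_ge_block:
  assumes "r \<le> 1 - exp (- (4 ^ j))"
  shows "1 / (2 * 4 ^ j) \<le> omega_hat nu r"
proof -
  have "1 * (Psi (1 - exp (- (2 * 4 ^ j))) - Psi (1 - exp (- (4 ^ j))))
      \<le> (LINT s:{r..<1}|lborel. nu s)"
    using assms block_interior_subset_blocks[of j]
    by (intro set_integral_ge_Psi_diff integrable_nu nu_nonneg) (auto simp: nu_def)
  then show ?thesis by (simp add: omega_hat_def Psi_one_minus_exp field_simps)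
qed

lemma nu_hat_le:
  assumes "0 \<le> r" "r < 1"
  shows "omega_hat nu r \<le> 1 / max (- ln (1 - r)) 1"
proof -
  define a where "a = max r (1 - exp (- 1))"
  have "exp (- 1) < (1::real)" "1 - exp (- 1) \<le> a" unfolding a_def by simp_all
  moreover have "a < 1" unfolding a_def using assms by simp
  ultimately have a: "0 < a" "a < 1" by linarith+
  have "omega_hat nu r \<le> 1 * - Psi a"
    unfolding omega_hat_def using a blocks_subset
    by (intro set_integral_le_Psi integrable_nu) (auto simp: nu_def a_def psi_nonneg)
  also have "- Psi a = 1 / max (- ln (1 - r)) 1"
  proof -
    have "- ln (1 - a) = max (- ln (1 - r)) 1"
      using le_one_minus_exp_iff[of r 1] assms unfolding a_def by (auto simp: max_def)
    then show ?thesis unfolding Psi_def by (simp add: divide_simps)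
  qed
  finally show ?thesis by simp
qed

lemma nu_hat_half_point_ge:
  assumes "0 \<le> r" "r < 1"
  shows "1 / (16 * max (- ln (1 - r)) 1) \<le> omega_hat nu ((1 + r) / 2)"
proof -
  define X where "X = max (- ln (1 - r)) 1"
  have X: "1 \<le> X" unfolding X_def by simp
  obtain j where j: "X + 1 \<le> 4 ^ j" "4 ^ j \<le> 8 * X"
    using exists_pow4_between[OF X] .
  have "- ln (1 - (1 + r) / 2) = - ln ((1 - r) / 2)" by (simp add: field_simps)
  also have "\<dots> = - ln (1 - r) + ln 2" using assms by (simp add: ln_div)
  also have "\<dots> \<le> 4 ^ j"
    using j(1) ln_le_minus_one[of 2] unfolding X_def by linarith
  finally have "(1 + r) / 2 \<le> 1 - exp (- (4 ^ j))"
    using le_one_minus_exp_iff[of "(1 + r) / 2"] assms by simp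
  then have "1 / (2 * 4 ^ j) \<le> omega_hat nu ((1 + r) / 2)" by (rule nu_hat_ge_block)
  moreover have "1 / (16 * X) \<le> 1 / (2 * 4 ^ j)" using j(2) X by (simp add: field_simps)
  ultimately show ?thesis unfolding X_def by linarith
qed

lemma radial_weight_nu: "radial_weight nu"
  unfolding radial_weight_def
proof (intro conjI ballI)
  show "set_integrable lborel {0..<1} nu"
    unfolding set_integrable_def by (rule integrable_mult_indicator) (simp_all add: integrable_nu)
  fix r :: real assume r: "r \<in> {0..<1}"
  show "0 \<le> nu r" by (rule nu_nonneg)
  obtain j where "- ln (1 - r) < 4 ^ j" using real_arch_pow[of 4 "- ln (1 - r)"] by auto
  then have "1 / (2 * 4 ^ j) \<le> omega_hat nu r"
    using r le_one_minus_exp_iff[of r] by (intro nu_hat_ge_block) simp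
  moreover have "0 < 1 / (2 * (4::real) ^ j)" by simp
  ultimately show "0 < omega_hat nu r" by linarith
qed

lemma nu_in_D_hat: "nu \<in> D_hat"
proof -
  have "omega_hat nu r \<le> 16 * omega_hat nu ((1 + r) / 2)" if "r \<in> {0..<1}" for r
  proof -
    have "omega_hat nu r \<le> 16 * (1 / (16 * max (- ln (1 - r)) 1))"
      using nu_hat_le[of r] that by simp
    also have "\<dots> \<le> 16 * omega_hat nu ((1 + r) / 2)"
      using nu_hat_half_point_ge[of r] that by simp
    finally show ?thesis .
  qed
  then show ?thesis unfolding D_hat_def using radial_weight_nu by (auto intro!: exI[of _ 16])
qed

lemma weight_power_nu_bounds:
  assumes "0 \<le> \<beta>"
  shows "0 \<le> weight_power nu \<beta> s" "weight_power nu \<beta> s \<le> nu s"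
proof -
  have "0 \<le> (1 - s) powr \<beta> \<and> (1 - s) powr \<beta> \<le> 1" if "s \<in> blocks"
  proof -
    have "1 - exp (- 1) \<le> s" "s < 1" using that blocks_subset by auto
    moreover have "exp (- 1) \<le> (1::real)" by simp
    ultimately have "0 \<le> 1 - s" "1 - s \<le> 1" by linarith+
    then show ?thesis using assms by (auto intro: powr_le1)
  qed
  then show "0 \<le> weight_power nu \<beta> s" "weight_power nu \<beta> s \<le> nu s"
    using nu_nonneg[of s] unfolding weight_power_def
    by (auto simp: nu_def intro: mult_left_le)
qed

lemma weight_power_nu_on_blocks:
  "s \<in> blocks \<Longrightarrow> weight_power nu \<beta> s = (1 - s) powr \<beta> * psi s"
  unfolding weight_power_def nu_def by simp

lemma integrable_weight_power_nu:
  assumes "0 \<le> \<beta>"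
  shows "integrable lborel (weight_power nu \<beta>)"
proof (rule Bochner_Integration.integrable_bound[OF integrable_nu])
  show "weight_power nu \<beta> \<in> borel_measurable lborel"
    unfolding weight_power_def[abs_def] by measurable
  show "AE s in lborel. norm (weight_power nu \<beta> s) \<le> norm (nu s)"
    using weight_power_nu_bounds[OF assms] nu_nonneg by auto
qed

lemma weight_power_nu_hat_ge:
  assumes "0 \<le> \<beta>" "a = 4 ^ j"
  shows "ln 2 / (4 * a\<^sup>2 * exp (2 * a * \<beta>))
    \<le> omega_hat (weight_power nu \<beta>) (1 - 2 * exp (- (2 * a)))"
proof -
  define r where "r = 1 - 2 * exp (- (2 * a))"
  define q where "q = 1 - exp (- (2 * a))"
  have a: "1 \<le> a" using assms(2) by simp
  have "2 * exp (- (2 * a)) \<le> exp (- a)" "exp (- a) < 1" "0 < exp (- (2 * a))"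
    using two_exp_neg_double_le[OF a] a by simp_all
  then have rq: "0 < r" "r < q" "q < 1" and "1 - exp (- a) \<le> r"
    unfolding q_def r_def by linarith+
  have "{r<..<q} \<subseteq> {1 - exp (- (4 ^ j)) <..< 1 - exp (- (2 * 4 ^ j))}"
    using \<open>1 - exp (- a) \<le> r\<close> assms(2) unfolding q_def by auto
  then have rq_blocks: "{r<..<q} \<subseteq> blocks"
    using block_interior_subset_blocks by blast
  have hat_ge: "1 / exp (2 * a * \<beta>) * (Psi q - Psi r) \<le> omega_hat (weight_power nu \<beta>) r"
    unfolding omega_hat_def
  proof (rule set_integral_ge_Psi_diff[OF integrable_weight_power_nu[OF assms(1)]
        weight_power_nu_bounds(1)[OF assms(1)] rq order_refl])
    fix s assume s: "s \<in> {r<..<q}"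
    then have "exp (- (2 * a)) powr \<beta> \<le> (1 - s) powr \<beta>"
      using assms(1) unfolding q_def by (intro powr_mono2) auto
    moreover have "exp (- (2 * a)) powr \<beta> = 1 / exp (2 * a * \<beta>)"
      unfolding exp_powr_real by (simp add: exp_minus field_simps)
    ultimately have "1 / exp (2 * a * \<beta>) \<le> (1 - s) powr \<beta>" by simp
    moreover have "s < 1" using s rq by simp
    ultimately have "1 / exp (2 * a * \<beta>) * psi s \<le> (1 - s) powr \<beta> * psi s"
      by (intro mult_right_mono psi_nonneg)
    moreover have "s \<in> blocks" using s rq_blocks by auto
    ultimately show "1 / exp (2 * a * \<beta>) * psi s \<le> weight_power nu \<beta> s"
      by (simp only: weight_power_nu_on_blocks)
  qed
  have Psi_diff: "ln 2 / (4 * a\<^sup>2) \<le> Psi q - Psi r"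
  proof -
    have l2: "0 < ln (2::real)" "ln (2::real) \<le> 1" using ln_le_minus_one[of 2] by auto
    have "Psi q - Psi r = ln 2 / (2 * a * (2 * a - ln 2))"
      using a l2 unfolding q_def r_def Psi_def by (simp add: ln_mult field_simps)
    also have "ln 2 / (4 * a\<^sup>2) \<le> \<dots>"
      using a l2 by (intro divide_left_mono) (auto simp: power2_eq_square)
    finally show ?thesis .
  qed
  have "ln 2 / (4 * a\<^sup>2 * exp (2 * a * \<beta>)) = 1 / exp (2 * a * \<beta>) * (ln 2 / (4 * a\<^sup>2))"
    by simp
  also have "\<dots> \<le> 1 / exp (2 * a * \<beta>) * (Psi q - Psi r)"
    using Psi_diff by (rule mult_left_mono) simp
  also have "\<dots> \<le> omega_hat (weight_power nu \<beta>) r" by (rule hat_ge)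
  finally show ?thesis unfolding r_def .
qed

lemma weight_power_nu_hat_le:
  assumes "0 \<le> \<beta>" "a = 4 ^ j"
  shows "omega_hat (weight_power nu \<beta>) (1 - exp (- (2 * a)))
    \<le> 1 / (4 * a * exp (4 * a * \<beta>))"
proof -
  define p where "p = 1 - exp (- (4 * a))"
  have a: "1 \<le> a" using assms(2) by simp
  have p: "0 < p" "p < 1" unfolding p_def using a by auto
  have "omega_hat (weight_power nu \<beta>) (1 - exp (- (2 * a))) \<le> 1 / exp (4 * a * \<beta>) * - Psi p"
    unfolding omega_hat_def
  proof (rule set_integral_le_Psi[OF integrable_weight_power_nu[OF assms(1)] p])
    fix s assume s: "1 - exp (- (2 * a)) \<le> s" "s < 1"
    show "weight_power nu \<beta> s \<le> (if p \<le> s then 1 / exp (4 * a * \<beta>) * psi s else 0)"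
    proof (cases "s \<in> blocks")
      case True
      then have "p \<le> s" using blocks_gap[of s j] s assms(2) unfolding p_def by simp
      then have "(1 - s) powr \<beta> \<le> exp (- (4 * a)) powr \<beta>"
        using assms(1) s unfolding p_def by (intro powr_mono2) auto
      moreover have "exp (- (4 * a)) powr \<beta> = 1 / exp (4 * a * \<beta>)"
        unfolding exp_powr_real by (simp add: exp_minus field_simps)
      ultimately have "(1 - s) powr \<beta> \<le> 1 / exp (4 * a * \<beta>)" by simp
      then have "(1 - s) powr \<beta> * psi s \<le> 1 / exp (4 * a * \<beta>) * psi s"
        using s(2) by (intro mult_right_mono psi_nonneg)
      then show ?thesis using \<open>p \<le> s\<close> weight_power_nu_on_blocks[OF True] by simp
    qed (use s in \<open>auto simp: weight_power_def nu_def psi_nonneg\<close>)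
  qed simp
  also have "- Psi p = 1 / (4 * a)" unfolding p_def using a by (simp add: Psi_one_minus_exp)
  finally show ?thesis by (simp add: mult.commute)
qed

lemma weight_power_nu_doubling_constant_ge:
  assumes "0 \<le> \<beta>" "0 \<le> C" "a = 4 ^ j"
    and doubling: "\<forall>r\<in>{0..<1}.
      omega_hat (weight_power nu \<beta>) r \<le> C * omega_hat (weight_power nu \<beta>) ((1 + r) / 2)"
  shows "exp (2 * a * \<beta>) * ln 2 \<le> C * a"
proof -
  let ?hat = "omega_hat (weight_power nu \<beta>)"
  define r where "r = 1 - 2 * exp (- (2 * a))"
  have "1 \<le> a" using assms(3) by simp
  then have "2 * exp (- (2 * a)) \<le> exp (- a)" "exp (- a) < 1" "0 < exp (- (2 * a))"
    using two_exp_neg_double_le by simp_all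
  then have r: "r \<in> {0..<1}" unfolding r_def atLeastLessThan_iff by (intro conjI) linarith+
  have "ln 2 / (4 * a\<^sup>2 * exp (2 * a * \<beta>)) \<le> ?hat r"
    unfolding r_def using weight_power_nu_hat_ge[OF assms(1,3)] .
  also have "\<dots> \<le> C * ?hat ((1 + r) / 2)" using doubling r by blast
  also have "(1 + r) / 2 = 1 - exp (- (2 * a))" unfolding r_def by simp
  also have "C * ?hat (1 - exp (- (2 * a))) \<le> C * (1 / (4 * a * exp (4 * a * \<beta>)))"
    using weight_power_nu_hat_le[OF assms(1,3)] assms(2) by (rule mult_left_mono)
  finally have "ln 2 / (4 * a\<^sup>2 * exp (2 * a * \<beta>)) \<le> C / (4 * a * exp (4 * a * \<beta>))"
    by simp
  moreover have "exp (4 * a * \<beta>) = exp (2 * a * \<beta>) * exp (2 * a * \<beta>)"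
    by (simp flip: exp_add)
  ultimately show ?thesis using \<open>1 \<le> a\<close> by (simp add: field_simps power2_eq_square)
qed

lemma weight_power_nu_notin_D_hat:
  assumes "0 < \<beta>"
  shows "weight_power nu \<beta> \<notin> D_hat"
proof
  assume "weight_power nu \<beta> \<in> D_hat"
  then obtain C where "1 \<le> C" and doubling: "\<forall>r\<in>{0..<1}.
      omega_hat (weight_power nu \<beta>) r \<le> C * omega_hat (weight_power nu \<beta>) ((1 + r) / 2)"
    unfolding D_hat_def by auto
  obtain j where j: "C / (2 * \<beta>\<^sup>2 * ln 2) < 4 ^ j"
    using real_arch_pow[of 4] by auto
  define a :: real where "a = 4 ^ j"
  have "1 \<le> a" unfolding a_def by simp
  have "a * (2 * a * \<beta>\<^sup>2 * ln 2) = (2 * a * \<beta>)\<^sup>2 / 2 * ln 2"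
    by (simp add: power2_eq_square)
  also have "\<dots> < exp (2 * a * \<beta>) * ln 2"
    using square_half_less_exp[of "2 * a * \<beta>"] \<open>1 \<le> a\<close> assms
    by (intro mult_strict_right_mono) simp_all
  also have "\<dots> \<le> C * a"
    using weight_power_nu_doubling_constant_ge[OF _ _ a_def doubling] assms \<open>1 \<le> C\<close> by simp
  finally have "2 * a * \<beta>\<^sup>2 * ln 2 < C" using \<open>1 \<le> a\<close> by (simp add: mult.commute)
  moreover have "C < 2 * a * \<beta>\<^sup>2 * ln 2"
    using j assms unfolding a_def by (simp add: field_simps)
  ultimately show False by simp
qed

theorem proposition10:
  fixes \<beta> :: real
  assumes "\<beta> > 0"
  shows "\<exists>\<nu>. radial_weight \<nu> \<and> \<nu> \<in> D_hat \<and> weight_power \<nu> \<beta> \<notin> D_hat"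
  using radial_weight_nu nu_in_D_hat weight_power_nu_notin_D_hat[OF assms] by blast

end
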